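(* Run the UCB-like policy described in the context and let $\mathcal A$ be the event defined there. On the event $\mathcal A$, for every epoch $\ell\in\{1,\dots,q\}$, $$\sum_{i=1}^N\Big(\sqrt{n_i^{\ell-1}}\,\Big|\log\frac{\hat v_i^\ell}{v_i^*}\Big|-\Psi\Big)^2\le N\Psi^2,$$ and consequently $\big|\log(\hat v_i^\ell/v_i^* )\big|\le\varepsilon(n_i^{\ell-1})=\frac{(\sqrt N+1)\Psi}{\sqrt{n_i^{\ell-1}}}$ for all $i\in\mathcal N$.
   Context: Setting: $N$ products $\mathcal N=\{1,\dots,N\}$, a no-purchase option $0$, $K$ resources, horizon of $T$ periods. For $v\in\mathbb R_{>0}^N$ and $S\subseteq\mathcal N$ the MNL probabilities are $\varphi(i,S\mid v)=v_i/(1+\sum_{j\in S}v_j)$ for $i\in S$, $\varphi(0,S\mid v)=1/(1+\sum_{j\in S}v_j)$, $\varphi(i,S\mid v)=0$ for $i\in\mathcal N\setminus S$. The unknown true vector $v^*$ satisfies $v_i^*\in[1/R,R]$. In period $t$ the retailer offers $S_t\subseteq\mathcal N$ and the customer chooses $I_t\in S_t\cup\{0\}$ with conditional probability $\varphi(I_t,S_t\mid v^* )$ given the past. Product $i$ has revenue $r(i)\in[0,1]$ and consumption $a(i,k)\in[0,1]$ of resource $k$, resource $k$ has inventory $Tc(k)$. UCB-like policy: parameters $\tau$ (a multiple of $N$), switch budget $L$, $\delta\in(0,1)$, $q=\lfloor (L-N)/(K+1)\rfloor\ge1$; $\Psi=\frac{R(1+NR)^2}{2}\sqrt{2+4\log\frac{2T^{1/2}q(K+1)N}{\delta}}$,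 $\varepsilon(n)=(\sqrt N+1)\Psi/\sqrt n$. Warm start: for $i=1,\dots,N$ offer $S_t=\{i\}$ for $t=(i-1)\tau/N+1,\dots,i\tau/N$. Let $T_0=\tau$, $T_\ell=\ell\lfloor (T-\tau)/q\rfloor+\tau$. In epoch $\ell$: let $n_i^{\ell-1}=\sum_{t=1}^{T_{\ell-1}}\mathbb I(i\in S_t)$; the MLE is $\hat v^\ell=e^{\hat\theta}$ where $\hat\theta$ minimizes the negative log-likelihood $\mathcal L_{\ell-1}(\theta)=-\sum_{t=1}^{T_{\ell-1}}\big[\theta_{I_t}-\log(1+\sum_{i\in S_t}e^{\theta_i})\big]$ ($\theta_0:=0$) over $\theta$ with $e^{\theta_i}\in[1/R,R]$; the assortments in periods $T_{\ell-1}+1,\dots,T_\ell$ are then chosen (by solving an LP built from $\hat v^\ell$ and randomizing) based only on data up to $T_{\ell-1}$. Event: with $\theta^*=(\log v_i^* )_i$, $\mathcal A_{i,\ell}=\{|\partial\mathcal L_{\ell-1}/\partial\theta_i(\theta^* )|\le\sqrt{2n_i^{\ell-1}(1+2\log\frac{2\sqrt TqN}{\delta})}\}$ and $\mathcal A=\bigcap_{i=1}^N\bigcap_{\ell=1}^q\mathcal A_{i,\ell}$. *)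

theory Defs
  imports "HOL-Analysis.Analysis"
begin

text \<open>Products are 1..N, the no-purchase option is 0.  A sample path consists of the
offered assortments S t and the choices I t, t = 1,2,...\<close>

definition th0 :: "(nat \<Rightarrow> real) \<Rightarrow> nat \<Rightarrow> real" where
  "th0 \<theta> j = (if j = 0 then 0 else \<theta> j)"

definition mnl_nll :: "(nat \<Rightarrow> nat set) \<Rightarrow> (nat \<Rightarrow> nat) \<Rightarrow> nat \<Rightarrow> (nat \<Rightarrow> real) \<Rightarrow> real" where
  "mnl_nll S I n \<theta> =
     - (\<Sum>t\<in>{1..n}. th0 \<theta> (I t) - ln (1 + (\<Sum>i\<in>S t. exp (\<theta> i))))"

definition nll_partial :: "(nat \<Rightarrow> nat set) \<Rightarrow> (nat \<Rightarrow> nat) \<Rightarrow> nat \<Rightarrow> nat \<Rightarrow> (nat \<Rightarrow> real) \<Rightarrow> real" where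
  "nll_partial S I n i \<theta> = deriv (\<lambda>s. mnl_nll S I n (\<theta>(i := s))) (\<theta> i)"

definition offer_count :: "(nat \<Rightarrow> nat set) \<Rightarrow> nat \<Rightarrow> nat \<Rightarrow> nat" where
  "offer_count S n i = card {t\<in>{1..n}. i \<in> S t}"

definition param_box :: "nat \<Rightarrow> real \<Rightarrow> (nat \<Rightarrow> real) set" where
  "param_box N R = {\<theta>. \<forall>i\<in>{1..N}. exp (\<theta> i) \<in> {1/R..R}}"

definition epoch_end :: "nat \<Rightarrow> nat \<Rightarrow> nat \<Rightarrow> nat \<Rightarrow> nat" where
  "epoch_end T \<tau> q l = l * ((T - \<tau>) div q) + \<tau>"

definition Psi :: "nat \<Rightarrow> nat \<Rightarrow> nat \<Rightarrow> nat \<Rightarrow> real \<Rightarrow> real \<Rightarrow> real" where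
  "Psi N K T q R \<delta> = R * (1 + real N * R)^2 / 2 *
     sqrt (2 + 4 * ln (2 * sqrt (real T) * real q * (real K + 1) * real N / \<delta>))"

definition eps_conf :: "nat \<Rightarrow> real \<Rightarrow> nat \<Rightarrow> real" where
  "eps_conf N \<Psi> n = (sqrt (real N) + 1) * \<Psi> / sqrt (real n)"

end

theory Submission
  imports Defs
begin

text \<open>
Write \<Delta> = \<theta>hat - \<theta>* and follow the negative log-likelihood L along the segment \<theta>* + s\<Delta>,
0 \<le> s \<le> 1, which stays in the parameter box.  Its s-derivative equals \<Delta>\<cdot>\<nabla>L(\<theta>*) at s = 0
and is nonpositive at s = 1, because \<theta>hat minimises L over the box.  Its second derivative is a
sum over periods of variances of \<Delta> under the MNL choice probabilities, each at least
(\<Sum>j\<in>S_t. \<Delta>_j^2) / (R(1+NR)^2) on the box.  Hence (\<Sum>i. n_i \<Delta>_i^2) / (R(1+NR)^2) \<le> -\<Delta>\<cdot>\<nabla>L(\<theta>*),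
and on the event A the right-hand side is at most (\<Sum>i. \<surd>n_i |\<Delta>_i|) 2\<Psi> / (R(1+NR)^2).  With
x_i = \<surd>n_i |\<Delta>_i| this says \<Sum> x_i^2 \<le> 2\<Psi> \<Sum> x_i, i.e. \<Sum> (x_i - \<Psi>)^2 \<le> N\<Psi>^2; the coordinatewise
bound follows because the warm start offers every product at least once.
\<close>

text \<open>\<open>mnl_prob \<theta> A i\<close> is \<phi>(i, A | e^\<theta>); \<open>mnl_mean \<theta> A d\<close> is the expectation of d(I) for a choice
  I drawn from \<phi>(\<cdot>, A | e^\<theta>), with d(0) = 0.\<close>

definition mnl_prob :: "(nat \<Rightarrow> real) \<Rightarrow> nat set \<Rightarrow> nat \<Rightarrow> real" where
  "mnl_prob \<theta> A i = (if i \<in> A then exp (\<theta> i) else 0) / (1 + (\<Sum>j\<in>A. exp (\<theta> j)))"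

definition mnl_mean :: "(nat \<Rightarrow> real) \<Rightarrow> nat set \<Rightarrow> (nat \<Rightarrow> real) \<Rightarrow> real" where
  "mnl_mean \<theta> A d = (\<Sum>j\<in>A. exp (\<theta> j) * d j) / (1 + (\<Sum>j\<in>A. exp (\<theta> j)))"

lemma mnl_denominator_pos: "0 < 1 + (\<Sum>j\<in>A. exp (\<theta> j :: real))"
  using sum_nonneg[of A "\<lambda>j. exp (\<theta> j)"] by (simp add: add_pos_nonneg)

lemma mnl_mean_eq_sum_prob: "mnl_mean \<theta> A d = (\<Sum>j\<in>A. mnl_prob \<theta> A j * d j)"
  unfolding mnl_mean_def mnl_prob_def by (simp add: sum_divide_distrib)

lemma th0_has_real_derivative:
  assumes "\<And>j. ((\<lambda>s. \<Theta> s j) has_real_derivative D j) (at s0)"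
  shows "((\<lambda>s. th0 (\<Theta> s) k) has_real_derivative th0 D k) (at s0)"
  using assms by (cases "k = 0") (auto simp: th0_def)

lemma mnl_nll_has_real_derivative:
  fixes \<Theta> :: "real \<Rightarrow> nat \<Rightarrow> real"
  assumes "\<And>j. ((\<lambda>s. \<Theta> s j) has_real_derivative D j) (at s0)"
  shows "((\<lambda>s. mnl_nll S I n (\<Theta> s)) has_real_derivative
           - (\<Sum>t\<in>{1..n}. th0 D (I t) - mnl_mean (\<Theta> s0) (S t) D)) (at s0)"
  unfolding mnl_nll_def mnl_mean_def
  by (auto intro!: derivative_eq_intros th0_has_real_derivative assms sum.cong mnl_denominator_pos
           simp: sum_divide_distrib)

lemma nll_partial_eq:
  assumes "i \<noteq> 0" and "\<And>t. t \<in> {1..n} \<Longrightarrow> finite (S t)"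
  shows "nll_partial S I n i \<theta> = (\<Sum>t\<in>{1..n}. mnl_prob \<theta> (S t) i - of_bool (I t = i))"
proof -
  define e :: "nat \<Rightarrow> real" where "e j = of_bool (j = i)" for j
  have "((\<lambda>s. (\<theta>(i := s)) j) has_real_derivative e j) (at (\<theta> i))" for j
    by (cases "j = i") (auto simp: e_def)
  from mnl_nll_has_real_derivative[of "\<lambda>s. \<theta>(i := s)", OF this]
  have "nll_partial S I n i \<theta> = - (\<Sum>t\<in>{1..n}. th0 e (I t) - mnl_mean \<theta> (S t) e)"
    unfolding nll_partial_def by (simp add: DERIV_imp_deriv)
  also have "\<dots> = (\<Sum>t\<in>{1..n}. mnl_prob \<theta> (S t) i - of_bool (I t = i))"
    using assms
    by (auto simp: th0_def e_def mnl_mean_eq_sum_prob mnl_prob_def sum_negf[symmetric]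
             of_bool_def if_distrib cong: if_cong intro!: sum.cong)
  finally show ?thesis .
qed

lemma sum_mnl_prob_eq_mnl_mean:
  assumes "finite B" "A \<subseteq> B"
  shows "(\<Sum>i\<in>B. d i * mnl_prob \<theta> A i) = mnl_mean \<theta> A d"
proof -
  have "(\<Sum>i\<in>B. d i * mnl_prob \<theta> A i) = (\<Sum>i\<in>A. d i * mnl_prob \<theta> A i)"
    using assms by (intro sum.mono_neutral_right) (auto simp: mnl_prob_def)
  then show ?thesis by (simp add: mnl_mean_eq_sum_prob mult.commute)
qed

lemma sum_observed_eq_th0:
  assumes "k \<in> insert 0 B" "0 \<notin> B" "finite B"
  shows "(\<Sum>i\<in>B. d i * of_bool (k = i)) = th0 d k"
  using assms by (auto simp: th0_def of_bool_def if_distrib cong: if_cong)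

lemma nll_gradient_inner:
  assumes S: "\<And>t. t \<in> {1..n} \<Longrightarrow> S t \<subseteq> {1..N}"
    and I: "\<And>t. t \<in> {1..n} \<Longrightarrow> I t \<in> insert 0 (S t)"
  shows "(\<Sum>i=1..N. d i * nll_partial S I n i \<theta>)
           = - (\<Sum>t\<in>{1..n}. th0 d (I t) - mnl_mean \<theta> (S t) d)"
proof -
  have fin: "finite (S t)" if "t \<in> {1..n}" for t
    using S[OF that] finite_subset by blast
  have "(\<Sum>i=1..N. d i * nll_partial S I n i \<theta>)
          = (\<Sum>i=1..N. \<Sum>t\<in>{1..n}. d i * mnl_prob \<theta> (S t) i - d i * of_bool (I t = i))"
  proof (intro sum.cong refl)
    fix i assume "i \<in> {1..N}"
    then have "nll_partial S I n i \<theta> = (\<Sum>t\<in>{1..n}. mnl_prob \<theta> (S t) i - of_bool (I t = i))"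
      by (intro nll_partial_eq fin) auto
    then show "d i * nll_partial S I n i \<theta>
        = (\<Sum>t\<in>{1..n}. d i * mnl_prob \<theta> (S t) i - d i * of_bool (I t = i))"
      by (simp add: sum_distrib_left right_diff_distrib)
  qed
  also have "\<dots> = (\<Sum>t\<in>{1..n}. \<Sum>i=1..N. d i * mnl_prob \<theta> (S t) i - d i * of_bool (I t = i))"
    by (rule sum.swap)
  also have "\<dots> = (\<Sum>t\<in>{1..n}. (\<Sum>i=1..N. d i * mnl_prob \<theta> (S t) i)
                           - (\<Sum>i=1..N. d i * of_bool (I t = i)))"
    by (simp only: sum_subtractf)
  also have "\<dots> = (\<Sum>t\<in>{1..n}. mnl_mean \<theta> (S t) d - th0 d (I t))"
    using S I by (intro sum.cong refl arg_cong2[where f = minus] sum_mnl_prob_eq_mnl_mean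
                        sum_observed_eq_th0) (blast | simp)+
  finally show ?thesis by (simp add: sum_negf[symmetric])
qed

lemma mnl_mean_has_real_derivative:
  "((\<lambda>s. mnl_mean (\<lambda>j. \<theta> j + s * d j) A d) has_real_derivative
     mnl_mean (\<lambda>j. \<theta> j + s * d j) A (\<lambda>j. (d j)\<^sup>2) - (mnl_mean (\<lambda>j. \<theta> j + s * d j) A d)\<^sup>2) (at s)"
proof -
  define U where "U = 1 + (\<Sum>j\<in>A. exp (\<theta> j + s * d j))"
  define V where "V = (\<Sum>j\<in>A. exp (\<theta> j + s * d j) * d j)"
  define W where "W = (\<Sum>j\<in>A. exp (\<theta> j + s * d j) * (d j)\<^sup>2)"
  have "U \<noteq> 0"
    unfolding U_def using mnl_denominator_pos[of "\<lambda>j. \<theta> j + s * d j" A] by simp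
  have dU: "((\<lambda>s. 1 + (\<Sum>j\<in>A. exp (\<theta> j + s * d j))) has_real_derivative V) (at s)"
    unfolding V_def by (auto intro!: derivative_eq_intros)
  have dV: "((\<lambda>s. \<Sum>j\<in>A. exp (\<theta> j + s * d j) * d j) has_real_derivative W) (at s)"
    unfolding W_def by (auto intro!: derivative_eq_intros simp: power2_eq_square mult.assoc)
  have "((\<lambda>s. mnl_mean (\<lambda>j. \<theta> j + s * d j) A d) has_real_derivative
          (W * U - V * V) / (U * U)) (at s)"
    using DERIV_divide[OF dV dU] \<open>U \<noteq> 0\<close> unfolding mnl_mean_def U_def V_def by simp
  moreover have "(W * U - V * V) / (U * U) = W / U - (V / U)\<^sup>2"
    using \<open>U \<noteq> 0\<close> by (simp add: field_simps power2_eq_square)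
  ultimately show ?thesis
    unfolding mnl_mean_def U_def V_def W_def by simp
qed

lemma weighted_Cauchy_Schwarz_sum:
  fixes u d :: "'a \<Rightarrow> real"
  assumes "\<And>j. j \<in> A \<Longrightarrow> 0 \<le> u j"
  shows "(\<Sum>j\<in>A. u j * d j)\<^sup>2 \<le> (\<Sum>j\<in>A. u j) * (\<Sum>j\<in>A. u j * (d j)\<^sup>2)"
proof -
  have "(\<Sum>j\<in>A. sqrt (u j) * (sqrt (u j) * d j))\<^sup>2
          \<le> (\<Sum>j\<in>A. (sqrt (u j))\<^sup>2) * (\<Sum>j\<in>A. (sqrt (u j) * d j)\<^sup>2)"
    by (rule Cauchy_Schwarz_ineq_sum)
  also have "\<dots> = (\<Sum>j\<in>A. u j) * (\<Sum>j\<in>A. u j * (d j)\<^sup>2)"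
    using assms by (simp add: power_mult_distrib)
  finally show ?thesis
    using assms by (simp add: mult.assoc[symmetric])
qed

lemma mnl_variance_lower_bound:
  assumes "finite A" "card A \<le> N" "R > 0" and box: "\<And>j. j \<in> A \<Longrightarrow> exp (\<theta> j) \<in> {1/R..R}"
  shows "(\<Sum>j\<in>A. (d j)\<^sup>2) / (R * (1 + real N * R)\<^sup>2)
           \<le> mnl_mean \<theta> A (\<lambda>j. (d j)\<^sup>2) - (mnl_mean \<theta> A d)\<^sup>2"
proof -
  define U where "U = (\<Sum>j\<in>A. exp (\<theta> j))"
  define V where "V = (\<Sum>j\<in>A. exp (\<theta> j) * d j)"
  define W where "W = (\<Sum>j\<in>A. exp (\<theta> j) * (d j)\<^sup>2)"
  have U_ge: "0 \<le> U" and W_ge: "0 \<le> W"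
    unfolding U_def W_def by (simp_all add: sum_nonneg)
  have U_le: "U \<le> real N * R"
  proof -
    have "U \<le> (\<Sum>j\<in>A. R)" unfolding U_def using box by (intro sum_mono) auto
    also have "\<dots> \<le> real N * R" using assms(2,3) by simp
    finally show ?thesis .
  qed
  have W_ge_sum: "(\<Sum>j\<in>A. (d j)\<^sup>2) / R \<le> W"
    unfolding W_def sum_divide_distrib
  proof (rule sum_mono)
    fix j assume "j \<in> A"
    then have "1 / R * (d j)\<^sup>2 \<le> exp (\<theta> j) * (d j)\<^sup>2"
      using box by (intro mult_right_mono) auto
    then show "(d j)\<^sup>2 / R \<le> exp (\<theta> j) * (d j)\<^sup>2" by simp
  qed
  have "V\<^sup>2 \<le> U * W"
    unfolding U_def V_def W_def by (rule weighted_Cauchy_Schwarz_sum) simp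
  have "(\<Sum>j\<in>A. (d j)\<^sup>2) / (R * (1 + real N * R)\<^sup>2) \<le> W / (1 + real N * R)\<^sup>2"
    using W_ge_sum by (simp add: divide_right_mono flip: divide_divide_eq_left)
  also have "\<dots> \<le> W / (1 + U)\<^sup>2"
    using U_ge U_le W_ge by (intro divide_left_mono power_mono) auto
  also have "\<dots> = W / (1 + U) - U * W / (1 + U)\<^sup>2"
    using U_ge by (simp add: field_simps power2_eq_square add_nonneg_eq_0_iff)
  also have "\<dots> \<le> W / (1 + U) - (V / (1 + U))\<^sup>2"
    using \<open>V\<^sup>2 \<le> U * W\<close> by (simp add: power_divide divide_right_mono)
  finally show ?thesis
    unfolding mnl_mean_def U_def V_def W_def by simp
qed

lemma exp_in_box_iff:
  fixes x R :: real
  assumes "R > 0"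
  shows "exp x \<in> {1/R..R} \<longleftrightarrow> x \<in> {- ln R..ln R}"
proof -
  have "exp (- ln R) = 1/R" "exp (ln R) = R"
    using assms by (auto simp: exp_minus inverse_eq_divide)
  then show ?thesis
    by (metis atLeastAtMost_iff exp_le_cancel_iff)
qed

lemma param_box_segment:
  assumes "R > 0" "\<theta> \<in> param_box N R" "\<theta>' \<in> param_box N R" "0 \<le> s" "s \<le> 1"
  shows "(\<lambda>j. \<theta> j + s * (\<theta>' j - \<theta> j)) \<in> param_box N R"
proof -
  have "\<theta> j + s * (\<theta>' j - \<theta> j) \<in> {- ln R..ln R}" if "j \<in> {1..N}" for j
  proof -
    have "exp (\<theta> j) \<in> {1/R..R}" "exp (\<theta>' j) \<in> {1/R..R}"
      using assms that by (simp_all add: param_box_def)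
    then have "\<theta> j \<in> {- ln R..ln R}" "\<theta>' j \<in> {- ln R..ln R}"
      using exp_in_box_iff[OF assms(1)] by blast+
    then show ?thesis
      using convexD_alt[of "{- ln R..ln R}" "\<theta> j" "\<theta>' j" s] assms(4,5)
      by (simp add: algebra_simps)
  qed
  then show ?thesis
    unfolding param_box_def exp_in_box_iff[OF assms(1)] by blast
qed

lemma has_real_derivative_nonpos_at_right_min:
  fixes f :: "real \<Rightarrow> real"
  assumes "(f has_real_derivative D) (at b)" "a < b"
    and min: "\<And>s. a \<le> s \<Longrightarrow> s \<le> b \<Longrightarrow> f b \<le> f s"
  shows "D \<le> 0"
proof (rule ccontr)
  assume "\<not> D \<le> 0"
  then obtain e where "e > 0" and e: "\<And>h. 0 < h \<Longrightarrow> h < e \<Longrightarrow> f (b - h) < f b"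
    using DERIV_pos_inc_left[OF assms(1)] by force
  define h where "h = min (e / 2) (b - a)"
  have "f (b - h) < f b" using e \<open>e > 0\<close> \<open>a < b\<close> by (simp add: h_def)
  moreover have "f b \<le> f (b - h)" using min \<open>e > 0\<close> \<open>a < b\<close> by (simp add: h_def)
  ultimately show False by simp
qed

lemma sum_offered_eq_offer_count:
  fixes f :: "nat \<Rightarrow> real"
  assumes "\<And>t. t \<in> {1..n} \<Longrightarrow> S t \<subseteq> B" "finite B"
  shows "(\<Sum>t\<in>{1..n}. \<Sum>j\<in>S t. f j) = (\<Sum>i\<in>B. real (offer_count S n i) * f i)"
proof -
  have "(\<Sum>t\<in>{1..n}. \<Sum>j\<in>S t. f j) = (\<Sum>t\<in>{1..n}. \<Sum>i\<in>B. if i \<in> S t then f i else 0)"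
  proof (rule sum.cong[OF refl])
    fix t assume "t \<in> {1..n}"
    then show "(\<Sum>j\<in>S t. f j) = (\<Sum>i\<in>B. if i \<in> S t then f i else 0)"
      using assms(1)[of t] assms(2) by (simp add: sum.inter_restrict[symmetric] Int_absorb1)
  qed
  also have "\<dots> = (\<Sum>i\<in>B. \<Sum>t\<in>{1..n}. if i \<in> S t then f i else 0)"
    by (rule sum.swap)
  also have "\<dots> = (\<Sum>i\<in>B. real (offer_count S n i) * f i)"
    by (simp add: sum.If_cases offer_count_def Int_def)
  finally show ?thesis .
qed

lemma mle_offer_weighted_sq_error_le:
  fixes \<theta>\<^sub>0 \<theta>\<^sub>1 :: "nat \<Rightarrow> real"
  assumes R: "R > 0"
    and box: "\<theta>\<^sub>0 \<in> param_box N R" "\<theta>\<^sub>1 \<in> param_box N R"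
    and min: "\<And>\<theta>. \<theta> \<in> param_box N R \<Longrightarrow> mnl_nll S I n \<theta>\<^sub>1 \<le> mnl_nll S I n \<theta>"
    and S: "\<And>t. t \<in> {1..n} \<Longrightarrow> S t \<subseteq> {1..N}"
    and I: "\<And>t. t \<in> {1..n} \<Longrightarrow> I t \<in> insert 0 (S t)"
  shows "(\<Sum>i=1..N. real (offer_count S n i) * (\<theta>\<^sub>1 i - \<theta>\<^sub>0 i)\<^sup>2) / (R * (1 + real N * R)\<^sup>2)
           \<le> - (\<Sum>i=1..N. (\<theta>\<^sub>1 i - \<theta>\<^sub>0 i) * nll_partial S I n i \<theta>\<^sub>0)"
    (is "?c \<le> _")
proof -
  define d where "d j = \<theta>\<^sub>1 j - \<theta>\<^sub>0 j" for j
  define \<theta> where "\<theta> s = (\<lambda>j. \<theta>\<^sub>0 j + s * d j)" for s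
  define \<Phi>' where "\<Phi>' s = - (\<Sum>t\<in>{1..n}. th0 d (I t) - mnl_mean (\<theta> s) (S t) d)" for s
  define \<Phi>'' where
    "\<Phi>'' s = (\<Sum>t\<in>{1..n}. mnl_mean (\<theta> s) (S t) (\<lambda>j. (d j)\<^sup>2) - (mnl_mean (\<theta> s) (S t) d)\<^sup>2)" for s
  have \<theta>_box: "\<theta> s \<in> param_box N R" if "0 \<le> s" "s \<le> 1" for s
    unfolding \<theta>_def d_def using param_box_segment[OF R box] that .
  have "\<theta> 0 = \<theta>\<^sub>0" "\<theta> 1 = \<theta>\<^sub>1"
    by (auto simp: \<theta>_def d_def)
  have "((\<lambda>s. mnl_nll S I n (\<theta> s)) has_real_derivative \<Phi>' s) (at s)" for s
    unfolding \<Phi>'_def \<theta>_def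
    by (rule mnl_nll_has_real_derivative) (auto intro!: derivative_eq_intros)
  then have "\<Phi>' 1 \<le> 0"
    by (rule has_real_derivative_nonpos_at_right_min[where a = 0])
       (use \<theta>_box min \<open>\<theta> 1 = \<theta>\<^sub>1\<close> in auto)
  have gradient: "\<Phi>' 0 = (\<Sum>i=1..N. d i * nll_partial S I n i \<theta>\<^sub>0)"
    unfolding \<Phi>'_def \<open>\<theta> 0 = \<theta>\<^sub>0\<close> using nll_gradient_inner[OF S I] by simp
  have d\<Phi>': "(\<Phi>' has_real_derivative \<Phi>'' s) (at s)" for s
    unfolding \<Phi>'_def \<Phi>''_def \<theta>_def
    by (auto intro!: derivative_eq_intros mnl_mean_has_real_derivative
             simp: sum_negf[symmetric] sum_subtractf)
  have curvature: "?c \<le> \<Phi>'' s" if "0 \<le> s" "s \<le> 1" for s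
  proof -
    have "?c = (\<Sum>t\<in>{1..n}. (\<Sum>j\<in>S t. (d j)\<^sup>2) / (R * (1 + real N * R)\<^sup>2))"
      using sum_offered_eq_offer_count[OF S, where f = "\<lambda>j. (d j)\<^sup>2"]
      by (simp add: d_def flip: sum_divide_distrib)
    also have "\<dots> \<le> \<Phi>'' s"
      unfolding \<Phi>''_def
    proof (rule sum_mono)
      fix t assume t: "t \<in> {1..n}"
      then have "finite (S t)" "card (S t) \<le> N"
        using S[OF t] finite_subset card_mono[of "{1..N}" "S t"] by auto
      moreover have "exp (\<theta> s j) \<in> {1/R..R}" if "j \<in> S t" for j
        using \<theta>_box[OF \<open>0 \<le> s\<close> \<open>s \<le> 1\<close>] S[OF t] that by (auto simp: param_box_def)
      ultimately show "(\<Sum>j\<in>S t. (d j)\<^sup>2) / (R * (1 + real N * R)\<^sup>2)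
          \<le> mnl_mean (\<theta> s) (S t) (\<lambda>j. (d j)\<^sup>2) - (mnl_mean (\<theta> s) (S t) d)\<^sup>2"
        using R by (intro mnl_variance_lower_bound) auto
    qed
    finally show ?thesis .
  qed
  have "\<Phi>' 0 - 0 * ?c \<le> \<Phi>' 1 - 1 * ?c"
  proof (rule DERIV_nonneg_imp_nondecreasing[of 0 1])
    fix s :: real assume "0 \<le> s" "s \<le> 1"
    have "((\<lambda>s. \<Phi>' s - s * ?c) has_real_derivative \<Phi>'' s - ?c) (at s)"
      using DERIV_diff[OF d\<Phi>' DERIV_cmult_right[OF DERIV_ident, of ?c]] by simp
    then show "\<exists>y. ((\<lambda>s. \<Phi>' s - s * ?c) has_real_derivative y) (at s) \<and> 0 \<le> y"
      using curvature[OF \<open>0 \<le> s\<close> \<open>s \<le> 1\<close>] by auto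
  qed simp
  then show ?thesis
    using \<open>\<Phi>' 1 \<le> 0\<close> gradient by (simp add: d_def)
qed

lemma sum_sq_dev_le_card_mult_sq:
  fixes x :: "'a \<Rightarrow> real"
  assumes "(\<Sum>i\<in>A. (x i)\<^sup>2) \<le> 2 * P * (\<Sum>i\<in>A. x i)"
  shows "(\<Sum>i\<in>A. (x i - P)\<^sup>2) \<le> real (card A) * P\<^sup>2"
proof -
  have "(\<Sum>i\<in>A. (x i - P)\<^sup>2) = (\<Sum>i\<in>A. (x i)\<^sup>2) - 2 * P * (\<Sum>i\<in>A. x i) + real (card A) * P\<^sup>2"
    by (simp add: power2_diff sum.distrib sum_subtractf sum_distrib_left mult.assoc mult.commute[of P])
  then show ?thesis using assms by simp
qed

lemma coordinate_le_of_sum_sq_dev_le: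
  fixes x :: "'a \<Rightarrow> real"
  assumes "(\<Sum>i\<in>A. (x i - P)\<^sup>2) \<le> real (card A) * P\<^sup>2" "finite A" "i \<in> A" "0 \<le> P"
  shows "x i \<le> (sqrt (real (card A)) + 1) * P"
proof -
  have "(x i - P)\<^sup>2 \<le> real (card A) * P\<^sup>2"
    using member_le_sum[of i A "\<lambda>i. (x i - P)\<^sup>2"] assms by simp
  then have "\<bar>x i - P\<bar> \<le> sqrt (real (card A)) * P"
    using real_sqrt_le_mono assms(4) by (fastforce simp: real_sqrt_mult)
  then show ?thesis by (simp add: algebra_simps)
qed

lemma one_le_confidence_ratio:
  assumes "T > 0" "q \<ge> 1" "N \<ge> 1" "0 < \<delta>" "\<delta> \<le> 1"
  shows "1 \<le> 2 * sqrt (real T) * real q * real N / \<delta>"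
proof -
  have "1 \<le> sqrt (real T)" using assms(1) by simp
  then have "1 \<le> 2 * sqrt (real T)" by linarith
  have "\<delta> \<le> 1 * 1 * 1" using assms by simp
  also have "\<dots> \<le> 2 * sqrt (real T) * real q * real N"
    using assms \<open>1 \<le> 2 * sqrt (real T)\<close> by (intro mult_mono) auto
  finally show ?thesis using assms by simp
qed

lemma Psi_nonneg:
  assumes "T > 0" "q \<ge> 1" "N \<ge> 1" "0 < \<delta>" "\<delta> \<le> 1" "R > 0"
  shows "0 \<le> Psi N K T q R \<delta>"
proof -
  define X where "X = 2 * sqrt (real T) * real q * (real K + 1) * real N / \<delta>"
  have "X = (2 * sqrt (real T) * real q * real N / \<delta>) * (real K + 1)"
    by (simp add: X_def)
  also have "1 * 1 \<le> \<dots>"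
    using one_le_confidence_ratio[OF assms(1-5)] by (intro mult_mono) auto
  finally have "0 \<le> ln X" by simp
  then show ?thesis
    using assms(6) by (simp add: Psi_def flip: X_def)
qed

lemma event_radius_le_Psi:
  assumes "T > 0" "q \<ge> 1" "N \<ge> 1" "0 < \<delta>" "R > 0"
  shows "sqrt (2 * real c * (1 + 2 * ln (2 * sqrt (real T) * real q * real N / \<delta>)))
           \<le> sqrt (real c) * (2 * Psi N K T q R \<delta> / (R * (1 + real N * R)\<^sup>2))"
proof -
  define X where "X = 2 * sqrt (real T) * real q * real N / \<delta>"
  have "X > 0" using assms by (simp add: X_def)
  have "sqrt (2 * real c * (1 + 2 * ln X)) = sqrt (real c) * sqrt (2 + 4 * ln X)"
    by (simp add: algebra_simps flip: real_sqrt_mult)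
  also have "\<dots> \<le> sqrt (real c) * sqrt (2 + 4 * ln (X * (real K + 1)))"
    using \<open>X > 0\<close> by (intro mult_left_mono real_sqrt_le_mono) (auto simp: ln_mult)
  also have "\<dots> = sqrt (real c) * (2 * Psi N K T q R \<delta> / (R * (1 + real N * R)\<^sup>2))"
    using assms(5) by (simp add: Psi_def X_def mult.commute mult.left_commute add_pos_nonneg
                                 add_nonneg_eq_0_iff)
  finally show ?thesis by (simp add: X_def)
qed

lemma abs_le_eps_conf:
  fixes d :: "nat \<Rightarrow> real" and c :: "nat \<Rightarrow> nat"
  assumes "(\<Sum>i=1..N. (sqrt (real (c i)) * \<bar>d i\<bar> - P)\<^sup>2) \<le> real N * P\<^sup>2"
    and "0 \<le> P" "i \<in> {1..N}" "0 < c i"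
  shows "\<bar>d i\<bar> \<le> eps_conf N P (c i)"
proof -
  have "sqrt (real (c i)) * \<bar>d i\<bar> \<le> (sqrt (real N) + 1) * P"
    using coordinate_le_of_sum_sq_dev_le[where x = "\<lambda>i. sqrt (real (c i)) * \<bar>d i\<bar>"
        and A = "{1..N}"] assms
    by simp
  moreover have "0 < sqrt (real (c i))" using assms(4) by simp
  ultimately show ?thesis by (simp add: eps_conf_def pos_le_divide_eq mult.commute)
qed

lemma offer_count_pos_of_warm_start:
  assumes "N dvd \<tau>" "0 < \<tau>" "\<tau> \<le> n" "i \<in> {1..N}"
    and warm: "\<forall>t\<in>{(i - 1) * (\<tau> div N) + 1 .. i * (\<tau> div N)}. S t = {i}"
  shows "0 < offer_count S n i"
proof -
  have "1 \<le> \<tau> div N"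
    using assms(1,2,4) by (auto simp: div_greater_zero_iff dvd_imp_le)
  define t where "t = i * (\<tau> div N)"
  have "t \<in> {(i - 1) * (\<tau> div N) + 1 .. i * (\<tau> div N)}"
    using assms(4) \<open>1 \<le> \<tau> div N\<close> by (cases i) (auto simp: t_def)
  moreover have "t \<le> N * (\<tau> div N)"
    using assms(4) by (simp add: t_def)
  ultimately have "t \<in> {t\<in>{1..n}. i \<in> S t}"
    using warm assms(1,3) by auto
  then show ?thesis
    by (auto simp: offer_count_def card_gt_0_iff)
qed

lemma epoch_end_le:
  assumes "l < q" "\<tau> \<le> T"
  shows "epoch_end T \<tau> q l \<le> T"
proof -
  have "l * ((T - \<tau>) div q) \<le> q * ((T - \<tau>) div q)"
    using assms(1) by simp
  also have "\<dots> \<le> T - \<tau>" by simp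
  finally show ?thesis
    using assms(2) by (simp add: epoch_end_def)
qed

lemma mle_error_bound:
  fixes \<theta>\<^sub>0 \<theta>\<^sub>1 :: "nat \<Rightarrow> real"
  assumes R: "R > 0"
    and box: "\<theta>\<^sub>0 \<in> param_box N R" "\<theta>\<^sub>1 \<in> param_box N R"
    and min: "\<And>\<theta>. \<theta> \<in> param_box N R \<Longrightarrow> mnl_nll S I n \<theta>\<^sub>1 \<le> mnl_nll S I n \<theta>"
    and S: "\<And>t. t \<in> {1..n} \<Longrightarrow> S t \<subseteq> {1..N}"
    and I: "\<And>t. t \<in> {1..n} \<Longrightarrow> I t \<in> insert 0 (S t)"
    and gradient: "\<And>i. i \<in> {1..N} \<Longrightarrow> \<bar>nll_partial S I n i \<theta>\<^sub>0\<bar>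
                     \<le> sqrt (real (offer_count S n i)) * (2 * P / (R * (1 + real N * R)\<^sup>2))"
  shows "(\<Sum>i=1..N. (sqrt (real (offer_count S n i)) * \<bar>\<theta>\<^sub>1 i - \<theta>\<^sub>0 i\<bar> - P)\<^sup>2) \<le> real N * P\<^sup>2"
proof -
  define m where "m = R * (1 + real N * R)\<^sup>2"
  define x where "x i = sqrt (real (offer_count S n i)) * \<bar>\<theta>\<^sub>1 i - \<theta>\<^sub>0 i\<bar>" for i
  have "0 < 1 + real N * R" using R by (simp add: add_pos_nonneg)
  then have "m > 0" using R by (simp add: m_def)
  have "(\<Sum>i=1..N. (x i)\<^sup>2) / m
          = (\<Sum>i=1..N. real (offer_count S n i) * (\<theta>\<^sub>1 i - \<theta>\<^sub>0 i)\<^sup>2) / m"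
    by (simp add: x_def power_mult_distrib)
  also have "\<dots> \<le> - (\<Sum>i=1..N. (\<theta>\<^sub>1 i - \<theta>\<^sub>0 i) * nll_partial S I n i \<theta>\<^sub>0)"
    unfolding m_def by (rule mle_offer_weighted_sq_error_le[OF R box min S I])
  also have "\<dots> \<le> (\<Sum>i=1..N. \<bar>\<theta>\<^sub>1 i - \<theta>\<^sub>0 i\<bar> * \<bar>nll_partial S I n i \<theta>\<^sub>0\<bar>)"
    unfolding sum_negf[symmetric] by (intro sum_mono) (metis abs_ge_minus_self abs_mult)
  also have "\<dots> \<le> (\<Sum>i=1..N. x i * (2 * P / m))"
  proof (rule sum_mono)
    fix i assume "i \<in> {1..N}"
    then have "\<bar>\<theta>\<^sub>1 i - \<theta>\<^sub>0 i\<bar> * \<bar>nll_partial S I n i \<theta>\<^sub>0\<bar>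
        \<le> \<bar>\<theta>\<^sub>1 i - \<theta>\<^sub>0 i\<bar> * (sqrt (real (offer_count S n i)) * (2 * P / m))"
      using gradient unfolding m_def by (intro mult_left_mono) auto
    then show "\<bar>\<theta>\<^sub>1 i - \<theta>\<^sub>0 i\<bar> * \<bar>nll_partial S I n i \<theta>\<^sub>0\<bar> \<le> x i * (2 * P / m)"
      by (simp add: x_def mult_ac)
  qed
  also have "\<dots> = 2 * P * (\<Sum>i=1..N. x i) / m"
    by (simp add: sum_divide_distrib[symmetric] sum_distrib_right[symmetric] mult.commute)
  finally have "(\<Sum>i=1..N. (x i)\<^sup>2) \<le> 2 * P * (\<Sum>i=1..N. x i)"
    using \<open>m > 0\<close> by (simp add: divide_le_cancel)
  then show ?thesis
    using sum_sq_dev_le_card_mult_sq[of x "{1..N}" P] by (simp add: x_def)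
qed

theorem theorem6:
  fixes N K T \<tau> L q :: nat and R \<delta> :: real
    and vstar :: "nat \<Rightarrow> real"
    and S :: "nat \<Rightarrow> nat set" and I :: "nat \<Rightarrow> nat"
  assumes N_pos: "N \<ge> 1"
    and tau_mult: "N dvd \<tau>" and tau_pos: "\<tau> > 0" and tau_le: "\<tau> \<le> T"
    and delta: "0 < \<delta>" "\<delta> < 1"
    and q_def: "q = nat \<lfloor>(real L - real N) / (real K + 1)\<rfloor>" and q_pos: "q \<ge> 1"
    and R_pos: "R > 0"
    and vstar_range: "\<forall>i\<in>{1..N}. vstar i \<in> {1/R..R}"
    \<comment> \<open>warm start\<close>
    and warm: "\<forall>i\<in>{1..N}. \<forall>t\<in>{(i - 1) * (\<tau> div N) + 1 .. i * (\<tau> div N)}. S t = {i}"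
    \<comment> \<open>later assortments: arbitrary subsets of the products\<close>
    and assort: "\<forall>t\<in>{1..T}. S t \<subseteq> {1..N}"
    and choice: "\<forall>t\<in>{1..T}. I t \<in> S t \<union> {0}"
    \<comment> \<open>the event A\<close>
    and event_A: "\<forall>i\<in>{1..N}. \<forall>l\<in>{1..q}.
        \<bar>nll_partial S I (epoch_end T \<tau> q (l - 1)) i (\<lambda>j. ln (vstar j))\<bar>
          \<le> sqrt (2 * real (offer_count S (epoch_end T \<tau> q (l - 1)) i)
                  * (1 + 2 * ln (2 * sqrt (real T) * real q * real N / \<delta>)))"
  shows "\<forall>l\<in>{1..q}. \<forall>\<theta>hat.
           (\<theta>hat \<in> param_box N R \<and>
            (\<forall>\<theta>\<in>param_box N R. mnl_nll S I (epoch_end T \<tau> q (l - 1)) \<theta>hat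
                                  \<le> mnl_nll S I (epoch_end T \<tau> q (l - 1)) \<theta>))
           \<longrightarrow>
           ((\<Sum>i=1..N. (sqrt (real (offer_count S (epoch_end T \<tau> q (l - 1)) i))
                        * \<bar>ln (exp (\<theta>hat i) / vstar i)\<bar> - Psi N K T q R \<delta>)^2)
               \<le> real N * (Psi N K T q R \<delta>)^2
            \<and> (\<forall>i\<in>{1..N}. \<bar>ln (exp (\<theta>hat i) / vstar i)\<bar>
                 \<le> eps_conf N (Psi N K T q R \<delta>) (offer_count S (epoch_end T \<tau> q (l - 1)) i)))"
proof (intro ballI allI impI)
  fix l \<theta>hat
  let ?n = "epoch_end T \<tau> q (l - 1)"
  let ?P = "Psi N K T q R \<delta>"
  let ?\<theta>star = "\<lambda>j. ln (vstar j)"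
  assume l: "l \<in> {1..q}" and mle: "\<theta>hat \<in> param_box N R \<and>
    (\<forall>\<theta>\<in>param_box N R. mnl_nll S I ?n \<theta>hat \<le> mnl_nll S I ?n \<theta>)"
  have "\<tau> \<le> ?n" "?n \<le> T"
    using l tau_le epoch_end_le[of "l - 1" q \<tau> T] by (auto simp: epoch_end_def)
  have vstar_pos: "0 < vstar i" if "i \<in> {1..N}" for i
    using vstar_range that R_pos by (auto intro: less_le_trans[of 0 "1/R"])
  then have "?\<theta>star \<in> param_box N R"
    using vstar_range by (simp add: param_box_def)
  have "\<bar>nll_partial S I ?n i ?\<theta>star\<bar>
          \<le> sqrt (real (offer_count S ?n i)) * (2 * ?P / (R * (1 + real N * R)\<^sup>2))"
    if "i \<in> {1..N}" for i
    by (rule order_trans[OF _ event_radius_le_Psi])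
       (use event_A that l tau_pos tau_le q_pos N_pos delta R_pos in auto)
  then have sq_bound: "(\<Sum>i=1..N. (sqrt (real (offer_count S ?n i)) * \<bar>\<theta>hat i - ?\<theta>star i\<bar> - ?P)\<^sup>2)
                         \<le> real N * ?P\<^sup>2"
    using mle assort choice \<open>?n \<le> T\<close>
    by (intro mle_error_bound[OF R_pos \<open>?\<theta>star \<in> param_box N R\<close>]) auto
  have "0 \<le> ?P"
    using tau_pos tau_le q_pos N_pos delta R_pos by (intro Psi_nonneg) auto
  have "ln (exp (\<theta>hat i) / vstar i) = \<theta>hat i - ?\<theta>star i" if "i \<in> {1..N}" for i
    using vstar_pos[OF that] by (simp add: ln_div)
  then show "(\<Sum>i=1..N. (sqrt (real (offer_count S ?n i)) * \<bar>ln (exp (\<theta>hat i) / vstar i)\<bar> - ?P)\<^sup>2)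
               \<le> real N * ?P\<^sup>2
             \<and> (\<forall>i\<in>{1..N}. \<bar>ln (exp (\<theta>hat i) / vstar i)\<bar> \<le> eps_conf N ?P (offer_count S ?n i))"
    using sq_bound abs_le_eps_conf[OF sq_bound \<open>0 \<le> ?P\<close>]
      offer_count_pos_of_warm_start[OF tau_mult tau_pos \<open>\<tau> \<le> ?n\<close>] warm
    by simp
qed

end
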